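(* Let $\varepsilon\ge0$ and let $X$ be any random variable taking values in $[d]$. If $\mathbf Z=(Z_1,\dots,Z_d)$ is obtained from $X$ by the unary-encoding mechanism with parameter $\varepsilon$, then $\{Z_1,\dots,Z_d\}$ is negatively associated.
   Context: Unary encoding with parameter $\varepsilon$: given $X=x\in[d]$, the coordinates $Z_1,\dots,Z_d$ are conditionally independent with $Z_j=\mathbb 1\{x=j\}$ with probability $\omega_{\varepsilon/2}$ and $Z_j=1-\mathbb 1\{x=j\}$ with probability $1-\omega_{\varepsilon/2}$, where $\omega_{\varepsilon/2}=e^{\varepsilon/2}/(e^{\varepsilon/2}+1)$. A collection of random variables $\{X_1,\dots,X_n\}$ is negatively associated if for every pair of disjoint $I_1,I_2\subseteq[n]$ with $I_1\cup I_2=[n]$, $\mathrm{Cov}(f(X_i:i\in I_1),g(X_{i'}:i'\in I_2))\le0$ for all real-valued $f,g$ that are both coordinatewise non-decreasing (equivalently both non-increasing). *)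

theory Defs
  imports "HOL-Probability.Probability"
begin

definition omega :: "real \<Rightarrow> real" where
  "omega t = exp t / (exp t + 1)"

text \<open>Outside {1..d} the vector is 0 (irrelevant default).\<close>
definition unary_enc :: "real \<Rightarrow> nat \<Rightarrow> nat \<Rightarrow> (nat \<Rightarrow> real) pmf" where
  "unary_enc \<epsilon> d x =
     Pi_pmf {1..d} 0
       (\<lambda>j. map_pmf (\<lambda>keep. if keep then (if x = j then 1 else 0)
                                   else 1 - (if x = j then 1 else 0))
                     (bernoulli_pmf (omega (\<epsilon> / 2))))"

definition unary_mech :: "real \<Rightarrow> nat \<Rightarrow> nat pmf \<Rightarrow> (nat \<Rightarrow> real) pmf" where
  "unary_mech \<epsilon> d p = bind_pmf p (unary_enc \<epsilon> d)"

definition cov_pmf :: "'a pmf \<Rightarrow> ('a \<Rightarrow> real) \<Rightarrow> ('a \<Rightarrow> real) \<Rightarrow> real" where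
  "cov_pmf M f g =
     measure_pmf.expectation M (\<lambda>z. f z * g z)
     - measure_pmf.expectation M f * measure_pmf.expectation M g"

text \<open>The random variables Z_i, i in A, jointly distributed as M, are negatively associated:
  for every partition of A into I1, I2 and all coordinatewise non-decreasing real functions
  f of (Z_i : i in I1) and g of (Z_i : i in I2), Cov(f, g) <= 0.
  A function of the sub-vector (Z_i : i in I) is represented as f applied to the vector
  that agrees with Z on I and is 0 elsewhere; "coordinatewise non-decreasing" is mono
  w.r.t. the pointwise order on nat => real.\<close>
definition neg_assoc :: "nat set \<Rightarrow> (nat \<Rightarrow> real) pmf \<Rightarrow> bool" where
  "neg_assoc A M \<longleftrightarrow>
     (\<forall>I1 I2 (f :: (nat \<Rightarrow> real) \<Rightarrow> real) (g :: (nat \<Rightarrow> real) \<Rightarrow> real).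
        I1 \<inter> I2 = {} \<and> I1 \<union> I2 = A \<and> mono f \<and> mono g \<longrightarrow>
        cov_pmf M (\<lambda>z. f (\<lambda>i. if i \<in> I1 then z i else 0))
                  (\<lambda>z. g (\<lambda>i. if i \<in> I2 then z i else 0)) \<le> 0)"

end

theory Submission
  imports Defs
begin

text \<open>Given X = x the coordinates are independent, so for a partition I1, I2 the covariance
  of f(Z on I1) and g(Z on I2) equals the covariance over X of the conditional means F(x) and
  G(x). If x is not in I1, every coordinate in I1 is Bernoulli(1 - \<omega>) and F(x) takes a
  baseline value F0; otherwise one of them becomes Bernoulli(\<omega>) with \<omega> \<ge> 1/2, which
  can only increase the mean of a monotone f, so F \<ge> F0, and likewise G \<ge> G0. Since no x
  lies in both I1 and I2, (F - F0)(G - G0) vanishes identically, and therefore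
  Cov(F, G) = -(E F - F0)(E G - G0) \<le> 0.\<close>

lemma finite_set_Pi_pmf:
  assumes "finite A" "\<And>i. i \<in> A \<Longrightarrow> finite (set_pmf (p i))"
  shows "finite (set_pmf (Pi_pmf A d p))"
  using assms by (auto simp: set_Pi_pmf)

lemma expectation_bind_pmf_finite:
  fixes f :: "'b \<Rightarrow> real"
  assumes M: "finite (set_pmf M)" and N: "\<And>x. x \<in> set_pmf M \<Longrightarrow> finite (set_pmf (N x))"
  shows "measure_pmf.expectation (bind_pmf M N) f =
         measure_pmf.expectation M (\<lambda>x. measure_pmf.expectation (N x) f)"
proof -
  define S where "S = set_pmf (bind_pmf M N)"
  have S: "finite S" unfolding S_def using M N by (auto simp: set_bind_pmf)
  have "measure_pmf.expectation (bind_pmf M N) f = (\<Sum>a\<in>S. f a * pmf (bind_pmf M N) a)"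
    by (rule integral_measure_pmf_real[OF S]) (auto simp: S_def)
  also have "\<dots> = (\<Sum>a\<in>S. measure_pmf.expectation M (\<lambda>x. f a * pmf (N x) a))"
    by (simp add: pmf_bind)
  also have "\<dots> = measure_pmf.expectation M (\<lambda>x. \<Sum>a\<in>S. f a * pmf (N x) a)"
    by (rule Bochner_Integration.integral_sum[symmetric]) (rule integrable_measure_pmf_finite[OF M])
  also have "\<dots> = measure_pmf.expectation M (\<lambda>x. measure_pmf.expectation (N x) f)"
    by (intro integral_cong_AE AE_pmfI integral_measure_pmf_real[OF S, symmetric])
       (auto simp: S_def set_bind_pmf)
  finally show ?thesis .
qed

lemma expectation_pair_pmf_mult:
  fixes f :: "'a \<Rightarrow> real" and g :: "'b \<Rightarrow> real"
  assumes "finite (set_pmf A)" "finite (set_pmf B)"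
  shows "measure_pmf.expectation (pair_pmf A B) (\<lambda>(u, v). f u * g v) =
         measure_pmf.expectation A f * measure_pmf.expectation B g"
  using assms by (simp add: pair_pmf_def expectation_bind_pmf_finite set_bind_pmf)

lemma expectation_Pi_pmf_insert:
  fixes f :: "('a \<Rightarrow> 'b) \<Rightarrow> real"
  assumes "finite A" "x \<notin> A" "\<And>i. finite (set_pmf (p i))"
  shows "measure_pmf.expectation (Pi_pmf (insert x A) d p) f =
         measure_pmf.expectation (p x)
           (\<lambda>b. measure_pmf.expectation (Pi_pmf A d p) (\<lambda>h. f (h(x := b))))"
  using assms by (simp add: Pi_pmf_insert' expectation_bind_pmf_finite finite_set_Pi_pmf set_bind_pmf)

lemma expectation_Pi_pmf_restrict:
  fixes f :: "('a \<Rightarrow> 'b) \<Rightarrow> real"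
  assumes "finite A" "A' \<subseteq> A"
  shows "measure_pmf.expectation (Pi_pmf A d p) (\<lambda>z. f (\<lambda>i. if i \<in> A' then z i else d)) =
         measure_pmf.expectation (Pi_pmf A' d p) f"
  using assms by (simp add: Pi_pmf_subset[of A A'])

lemma Pi_pmf_union_restrict:
  assumes "finite A" "finite B" "A \<inter> B = {}"
  shows "map_pmf (\<lambda>z. (\<lambda>i. if i \<in> A then z i else d, \<lambda>i. if i \<in> B then z i else d))
           (Pi_pmf (A \<union> B) d p) = pair_pmf (Pi_pmf A d p) (Pi_pmf B d p)"
proof -
  have restrict_merge: "(\<lambda>i. if i \<in> A then (if i \<in> A then u i else v i) else d,
         \<lambda>i. if i \<in> B then (if i \<in> A then u i else v i) else d) = (u, v)"
    if "(u, v) \<in> set_pmf (pair_pmf (Pi_pmf A d p) (Pi_pmf B d p))" for u v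
    using that set_Pi_pmf_subset[OF assms(1), of d p] set_Pi_pmf_subset[OF assms(2), of d p] assms(3)
    by (fastforce simp: fun_eq_iff)
  show ?thesis
    using assms by (simp add: Pi_pmf_union pmf.map_comp o_def case_prod_beta')
      (intro map_pmf_idI, use restrict_merge in \<open>force\<close>)
qed

lemma expectation_Pi_pmf_union_mult:
  fixes f g :: "('a \<Rightarrow> 'b) \<Rightarrow> real"
  assumes "finite A" "finite B" "A \<inter> B = {}" "\<And>i. finite (set_pmf (p i))"
  shows "measure_pmf.expectation (Pi_pmf (A \<union> B) d p)
           (\<lambda>z. f (\<lambda>i. if i \<in> A then z i else d) * g (\<lambda>i. if i \<in> B then z i else d)) =
         measure_pmf.expectation (Pi_pmf A d p) f * measure_pmf.expectation (Pi_pmf B d p) g"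
proof -
  have "measure_pmf.expectation (Pi_pmf (A \<union> B) d p)
          (\<lambda>z. f (\<lambda>i. if i \<in> A then z i else d) * g (\<lambda>i. if i \<in> B then z i else d)) =
        measure_pmf.expectation (pair_pmf (Pi_pmf A d p) (Pi_pmf B d p)) (\<lambda>(u, v). f u * g v)"
    by (simp flip: Pi_pmf_union_restrict[OF assms(1-3)])
  also have "\<dots> = measure_pmf.expectation (Pi_pmf A d p) f * measure_pmf.expectation (Pi_pmf B d p) g"
    using assms by (intro expectation_pair_pmf_mult finite_set_Pi_pmf)
  finally show ?thesis .
qed

lemma cov_pmf_bind_Pi_pmf:
  fixes f g :: "('a \<Rightarrow> 'b) \<Rightarrow> real"
  assumes "finite (set_pmf M)" "finite A" "finite B" "A \<inter> B = {}"
    and "\<And>x i. finite (set_pmf (p x i))"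
  shows "cov_pmf (bind_pmf M (\<lambda>x. Pi_pmf (A \<union> B) d (p x)))
           (\<lambda>z. f (\<lambda>i. if i \<in> A then z i else d)) (\<lambda>z. g (\<lambda>i. if i \<in> B then z i else d)) =
         cov_pmf M (\<lambda>x. measure_pmf.expectation (Pi_pmf A d (p x)) f)
                   (\<lambda>x. measure_pmf.expectation (Pi_pmf B d (p x)) g)"
  unfolding cov_pmf_def using assms
  by (simp add: expectation_bind_pmf_finite finite_set_Pi_pmf expectation_Pi_pmf_union_mult
      expectation_Pi_pmf_restrict)

lemma cov_pmf_nonpos_of_disjoint_excess:
  fixes a b :: "'a \<Rightarrow> real"
  assumes fin: "finite (set_pmf M)"
    and a0: "\<And>x. x \<in> set_pmf M \<Longrightarrow> a\<^sub>0 \<le> a x"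
    and b0: "\<And>x. x \<in> set_pmf M \<Longrightarrow> b\<^sub>0 \<le> b x"
    and disj: "\<And>x. x \<in> set_pmf M \<Longrightarrow> a x = a\<^sub>0 \<or> b x = b\<^sub>0"
  shows "cov_pmf M a b \<le> 0"
proof -
  let ?E = "measure_pmf.expectation M"
  have int: "integrable (measure_pmf M) h" for h :: "'a \<Rightarrow> real"
    by (rule integrable_measure_pmf_finite[OF fin])
  have product: "a x * b x = a\<^sub>0 * b x + b\<^sub>0 * a x - a\<^sub>0 * b\<^sub>0" if "x \<in> set_pmf M" for x
    using disj[OF that] by (auto simp: algebra_simps)
  have "?E (\<lambda>x. a x * b x) = ?E (\<lambda>x. a\<^sub>0 * b x + b\<^sub>0 * a x - a\<^sub>0 * b\<^sub>0)"
    by (intro integral_cong_AE AE_pmfI) (simp_all add: product)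
  also have "\<dots> = a\<^sub>0 * ?E b + b\<^sub>0 * ?E a - a\<^sub>0 * b\<^sub>0"
    by (simp add: int)
  finally have "cov_pmf M a b = - ((?E a - a\<^sub>0) * (?E b - b\<^sub>0))"
    unfolding cov_pmf_def by (simp add: algebra_simps)
  moreover have "a\<^sub>0 \<le> ?E a" "b\<^sub>0 \<le> ?E b"
    by (intro measure_pmf.integral_ge_const int AE_pmfI a0 b0; assumption)+
  ultimately show ?thesis by simp
qed

lemma map_pmf_Not_bernoulli_pmf:
  assumes "0 \<le> p" "p \<le> 1"
  shows "map_pmf Not (bernoulli_pmf p) = bernoulli_pmf (1 - p)"
proof (rule pmf_eqI)
  fix b
  have "Not -` {b} = {\<not> b}" by auto
  then show "pmf (map_pmf Not (bernoulli_pmf p)) b = pmf (bernoulli_pmf (1 - p)) b"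
    using assms by (cases b) (simp_all add: pmf_map measure_pmf_single)
qed

definition Pi_bernoulli_pmf :: "'a set \<Rightarrow> ('a \<Rightarrow> real) \<Rightarrow> ('a \<Rightarrow> real) pmf" where
  "Pi_bernoulli_pmf I q = Pi_pmf I 0 (\<lambda>i. map_pmf of_bool (bernoulli_pmf (q i)))"

lemma expectation_of_bool_bernoulli_pmf_mono:
  fixes \<phi> :: "real \<Rightarrow> real"
  assumes "0 \<le> a" "a \<le> b" "b \<le> 1" "\<phi> 0 \<le> \<phi> 1"
  shows "measure_pmf.expectation (map_pmf of_bool (bernoulli_pmf a)) \<phi> \<le>
         measure_pmf.expectation (map_pmf of_bool (bernoulli_pmf b)) \<phi>"
proof -
  have "0 \<le> (b - a) * (\<phi> 1 - \<phi> 0)"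
    using assms by simp
  then show ?thesis
    using assms by (simp add: algebra_simps)
qed

lemma expectation_Pi_bernoulli_pmf_mono:
  fixes f :: "('a \<Rightarrow> real) \<Rightarrow> real"
  assumes "finite I" "mono f" "\<And>i. i \<in> I \<Longrightarrow> 0 \<le> q i \<and> q i \<le> q' i \<and> q' i \<le> 1"
  shows "measure_pmf.expectation (Pi_bernoulli_pmf I q) f \<le>
         measure_pmf.expectation (Pi_bernoulli_pmf I q') f"
  using assms
proof (induction I arbitrary: f rule: finite_induct)
  case empty
  then show ?case by (simp add: Pi_bernoulli_pmf_def)
next
  case (insert x J)
  define \<phi> where "\<phi> r b = measure_pmf.expectation (Pi_bernoulli_pmf J r) (\<lambda>h. f (h(x := b)))"
    for r b
  have upd_mono: "mono (\<lambda>h. f (h(x := b)))" for b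
    by (intro monoI monoD[OF insert.prems(1)]) (simp add: le_fun_def)
  have finite_bits: "finite (set_pmf (map_pmf of_bool (bernoulli_pmf r) :: real pmf))" for r
    by simp
  have expand: "measure_pmf.expectation (Pi_bernoulli_pmf (insert x J) r) f =
      measure_pmf.expectation (map_pmf of_bool (bernoulli_pmf (r x))) (\<phi> r)" for r
    unfolding Pi_bernoulli_pmf_def \<phi>_def
    by (rule expectation_Pi_pmf_insert) (use insert.hyps finite_bits in auto)
  have "measure_pmf.expectation (map_pmf of_bool (bernoulli_pmf (q x))) (\<phi> q) \<le>
        measure_pmf.expectation (map_pmf of_bool (bernoulli_pmf (q x))) (\<phi> q')"
    unfolding \<phi>_def using insert.prems(2)
    by (intro integral_mono integrable_measure_pmf_finite finite_bits insert.IH upd_mono) auto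
  also have "\<dots> \<le> measure_pmf.expectation (map_pmf of_bool (bernoulli_pmf (q' x))) (\<phi> q')"
  proof (rule expectation_of_bool_bernoulli_pmf_mono)
    show "\<phi> q' 0 \<le> \<phi> q' 1"
      unfolding \<phi>_def Pi_bernoulli_pmf_def
      by (intro integral_mono integrable_measure_pmf_finite finite_set_Pi_pmf finite_bits
          monoD[OF insert.prems(1)] insert.hyps) (auto simp: le_fun_def)
  qed (use insert.prems(2) in auto)
  finally show ?case
    by (simp only: expand)
qed

lemma omega_bounds: "0 < omega t" "omega t < 1"
  unfolding omega_def by (simp_all add: add_pos_pos)

lemma half_le_omega: "0 \<le> t \<Longrightarrow> 1 / 2 \<le> omega t"
  unfolding omega_def by (simp add: add_pos_pos le_divide_eq)

definition unary_bit_prob :: "real \<Rightarrow> nat \<Rightarrow> nat \<Rightarrow> real" where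
  "unary_bit_prob \<epsilon> x j = (if x = j then omega (\<epsilon> / 2) else 1 - omega (\<epsilon> / 2))"

lemma unary_enc_eq_Pi_bernoulli_pmf:
  "unary_enc \<epsilon> d x = Pi_bernoulli_pmf {1..d} (unary_bit_prob \<epsilon> x)"
proof -
  have coord: "(\<lambda>keep. if keep then (if x = j then 1 else 0) else 1 - (if x = j then 1 else 0)) =
      (if x = j then of_bool else of_bool \<circ> Not :: bool \<Rightarrow> real)" for j
    by (auto simp: fun_eq_iff)
  have "map_pmf (if x = j then of_bool else of_bool \<circ> Not) (bernoulli_pmf (omega (\<epsilon> / 2))) =
        (map_pmf of_bool (bernoulli_pmf (unary_bit_prob \<epsilon> x j)) :: real pmf)" for j
    using omega_bounds[of "\<epsilon> / 2"]
    by (simp flip: pmf.map_comp add: unary_bit_prob_def map_pmf_Not_bernoulli_pmf)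
  then show ?thesis
    unfolding unary_enc_def Pi_bernoulli_pmf_def coord by simp
qed

lemma Pi_bernoulli_pmf_unary_outside:
  "x \<notin> I \<Longrightarrow> Pi_bernoulli_pmf I (unary_bit_prob \<epsilon> x) = Pi_bernoulli_pmf I (\<lambda>_. 1 - omega (\<epsilon> / 2))"
  unfolding Pi_bernoulli_pmf_def unary_bit_prob_def by (intro Pi_pmf_cong) auto

lemma expectation_Pi_bernoulli_pmf_unary_ge_baseline:
  fixes f :: "(nat \<Rightarrow> real) \<Rightarrow> real"
  assumes "finite I" "mono f" "0 \<le> \<epsilon>"
  shows "measure_pmf.expectation (Pi_bernoulli_pmf I (\<lambda>_. 1 - omega (\<epsilon> / 2))) f \<le>
         measure_pmf.expectation (Pi_bernoulli_pmf I (unary_bit_prob \<epsilon> x)) f"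
  using assms omega_bounds[of "\<epsilon> / 2"] half_le_omega[of "\<epsilon> / 2"]
  by (intro expectation_Pi_bernoulli_pmf_mono) (auto simp: unary_bit_prob_def)

lemma cov_pmf_unary_mech:
  fixes f g :: "(nat \<Rightarrow> real) \<Rightarrow> real"
  assumes "finite (set_pmf p)" "I1 \<inter> I2 = {}" "I1 \<union> I2 = {1..d}"
  shows "cov_pmf (unary_mech \<epsilon> d p)
           (\<lambda>z. f (\<lambda>i. if i \<in> I1 then z i else 0)) (\<lambda>z. g (\<lambda>i. if i \<in> I2 then z i else 0)) =
         cov_pmf p (\<lambda>x. measure_pmf.expectation (Pi_bernoulli_pmf I1 (unary_bit_prob \<epsilon> x)) f)
                   (\<lambda>x. measure_pmf.expectation (Pi_bernoulli_pmf I2 (unary_bit_prob \<epsilon> x)) g)"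
proof -
  have mech: "unary_mech \<epsilon> d p = bind_pmf p (\<lambda>x. Pi_pmf (I1 \<union> I2) 0
                (\<lambda>j. map_pmf of_bool (bernoulli_pmf (unary_bit_prob \<epsilon> x j))))"
    unfolding unary_mech_def
    by (intro bind_pmf_cong) (simp_all add: unary_enc_eq_Pi_bernoulli_pmf Pi_bernoulli_pmf_def assms(3))
  have "finite I1" "finite I2"
    using assms(3) by (metis finite_Un finite_atLeastAtMost)+
  show ?thesis
    unfolding mech Pi_bernoulli_pmf_def
    by (rule cov_pmf_bind_Pi_pmf) (use assms(1,2) \<open>finite I1\<close> \<open>finite I2\<close> in simp_all)
qed

lemma cov_pmf_unary_conditional_means_nonpos:
  fixes f g :: "(nat \<Rightarrow> real) \<Rightarrow> real"
  assumes "finite (set_pmf p)" "finite I1" "finite I2" "I1 \<inter> I2 = {}"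
    and "mono f" "mono g" "0 \<le> \<epsilon>"
  shows "cov_pmf p (\<lambda>x. measure_pmf.expectation (Pi_bernoulli_pmf I1 (unary_bit_prob \<epsilon> x)) f)
                   (\<lambda>x. measure_pmf.expectation (Pi_bernoulli_pmf I2 (unary_bit_prob \<epsilon> x)) g) \<le> 0"
proof (rule cov_pmf_nonpos_of_disjoint_excess)
  show "measure_pmf.expectation (Pi_bernoulli_pmf I1 (unary_bit_prob \<epsilon> x)) f =
          measure_pmf.expectation (Pi_bernoulli_pmf I1 (\<lambda>_. 1 - omega (\<epsilon> / 2))) f \<or>
        measure_pmf.expectation (Pi_bernoulli_pmf I2 (unary_bit_prob \<epsilon> x)) g =
          measure_pmf.expectation (Pi_bernoulli_pmf I2 (\<lambda>_. 1 - omega (\<epsilon> / 2))) g" for x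
    using assms(4) by (cases "x \<in> I1") (simp_all add: Pi_bernoulli_pmf_unary_outside disjoint_iff)
qed (use assms in \<open>simp_all add: expectation_Pi_bernoulli_pmf_unary_ge_baseline\<close>)

theorem mainTheorem9:
  fixes \<epsilon> :: real and d :: nat and p :: "nat pmf"
  assumes "\<epsilon> \<ge> 0"
    and "set_pmf p \<subseteq> {1..d}"
  shows "neg_assoc {1..d} (unary_mech \<epsilon> d p)"
  unfolding neg_assoc_def
proof (intro allI impI, elim conjE)
  fix I1 I2 :: "nat set" and f g :: "(nat \<Rightarrow> real) \<Rightarrow> real"
  assume disjoint: "I1 \<inter> I2 = {}" and cover: "I1 \<union> I2 = {1..d}" and "mono f" "mono g"
  have "finite I1" "finite I2"
    using cover by (metis finite_Un finite_atLeastAtMost)+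
  moreover have "finite (set_pmf p)"
    using assms(2) by (rule finite_subset) simp
  ultimately show "cov_pmf (unary_mech \<epsilon> d p) (\<lambda>z. f (\<lambda>i. if i \<in> I1 then z i else 0))
                     (\<lambda>z. g (\<lambda>i. if i \<in> I2 then z i else 0)) \<le> 0"
    using disjoint cover \<open>mono f\<close> \<open>mono g\<close> assms(1)
    by (simp add: cov_pmf_unary_mech cov_pmf_unary_conditional_means_nonpos)
qed

end
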